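(* Let $n\ge1$, let $\lambda=(\lambda_1\ge\cdots\ge\lambda_n\ge0)$ be a partition (padded with zeros to length $n$), and let $\boldsymbol\beta=(\beta_1,\dots,\beta_{n-1})$ be parameters. Then, as an identity of rational functions in $q$ (equivalently, for every complex $q$ with $q^m\ne1$ for $1\le m\le n-1$), $$G_\lambda(1,q,q^2,\dots,q^{n-1}\mid\boldsymbol\beta)=\sum_{k_1=0}^{0}\sum_{k_2=0}^{1}\cdots\sum_{k_n=0}^{n-1} e^{(0)}_{k_1}e^{(1)}_{k_2}\cdots e^{(n-1)}_{k_n}\prod_{1\le i<j\le n}\frac{q^{\lambda_j+n-j+k_j}-q^{\lambda_i+n-i+k_i}}{q^{n-j}-q^{n-i}},$$ where $e^{(j-1)}_{k}=e_k(\beta_1,\dots,\beta_{j-1})$ is the $k$-th elementary symmetric polynomial in $\beta_1,\dots,\beta_{j-1}$ (with $e^{(j-1)}_0=1$). In particular, for a single parameter $\beta$, $$G_\lambda(1,q,\dots,q^{n-1}\mid\beta)=\sum_{k_1=0}^{0}\sum_{k_2=0}^{1}\cdots\sum_{k_n=0}^{n-1}\binom{0}{k_1}\binom{1}{k_2}\cdots\binom{n-1}{k_n}\beta^{k_1+\cdots+k_n}\prod_{1\le i<j\le n}\frac{q^{\lambda_j+n-j+k_j}-q^{\lambda_i+n-i+k_i}}{q^{n-j}-q^{n-i}}.$$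
   Context: The refined Grothendieck polynomial in $x=(x_1,\dots,x_n)$ with parameters $\boldsymbol\beta=(\beta_1,\dots,\beta_{n-1})$ is defined by $$G_\lambda(x\mid\boldsymbol\beta)=\frac{\det\Big(x_i^{\lambda_j+n-j}(1+\beta_1x_i)(1+\beta_2x_i)\cdots(1+\beta_{j-1}x_i)\Big)_{1\le i,j\le n}}{\prod_{1\le i<j\le n}(x_i-x_j)}$$ (for $j=1$ the product of factors $(1+\beta_\cdot x_i)$ is empty). The single-parameter Grothendieck polynomial $G_\lambda(x\mid\beta)$ is $G_\lambda(x\mid\beta,\beta,\dots,\beta)$; it is known (Ikeda–Naruse) that this equals $\sum_{T\in\mathrm{SVT}(\lambda,n)}\beta^{|T|-|\lambda|}x^{\omega(T)}$, where $\mathrm{SVT}(\lambda,n)$ is the set of set-valued tableaux of shape $\lambda$ with entries in $[n]=\{1,\dots,n\}$ (each box $(i,j)$ of the Young diagram gets a nonempty $T_{i,j}\subseteq[n]$ with $\max T_{i,j}\le\min T_{i,j+1}$, $\max T_{i,j}<\min T_{i+1,j}$), $|T|=\sum|T_{i,j}|$, $|\lambda|=\sum\lambda_i$, and $x^{\omega(T)}=\prod_m x_m^{\#\{\text{boxes whose set contains } m\}}$. *)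

theory Defs
  imports Complex_Main "HOL-Combinatorics.Permutations" "HOL-Library.FuncSet"
begin

text \<open>Indices are 1-based: x 1 .. x n, lam 1 .. lam n, beta 1 .. beta (n-1).
  The n x n determinant is written out by the Leibniz formula over permutations of {1..n}.\<close>

definition gmat :: "nat \<Rightarrow> (nat \<Rightarrow> nat) \<Rightarrow> (nat \<Rightarrow> complex) \<Rightarrow> (nat \<Rightarrow> complex)
    \<Rightarrow> nat \<Rightarrow> nat \<Rightarrow> complex" where
  "gmat n lam beta x i j =
     x i ^ (lam j + n - j) * (\<Prod>m\<in>{1..<j}. (1 + beta m * x i))"

definition refined_groth :: "nat \<Rightarrow> (nat \<Rightarrow> nat) \<Rightarrow> (nat \<Rightarrow> complex) \<Rightarrow> (nat \<Rightarrow> complex) \<Rightarrow> complex" where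
  "refined_groth n lam beta x =
     (\<Sum>p | p permutes {1..n}. of_int (sign p) * (\<Prod>i\<in>{1..n}. gmat n lam beta x i (p i)))
     / (\<Prod>i\<in>{1..n}. \<Prod>j\<in>{i<..n}. (x i - x j))"

definition esym :: "nat \<Rightarrow> nat \<Rightarrow> (nat \<Rightarrow> complex) \<Rightarrow> complex" where
  "esym r k beta = (\<Sum>S | S \<subseteq> {1..r} \<and> card S = k. \<Prod>m\<in>S. beta m)"

definition is_partition :: "nat \<Rightarrow> (nat \<Rightarrow> nat) \<Rightarrow> bool" where
  "is_partition n lam \<longleftrightarrow> (\<forall>i j. 1 \<le> i \<longrightarrow> i \<le> j \<longrightarrow> j \<le> n \<longrightarrow> lam j \<le> lam i)"

definition qprod :: "nat \<Rightarrow> (nat \<Rightarrow> nat) \<Rightarrow> complex \<Rightarrow> (nat \<Rightarrow> nat) \<Rightarrow> complex" where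
  "qprod n lam q k = (\<Prod>i\<in>{1..n}. \<Prod>j\<in>{i<..n}.
      (q ^ (lam j + n - j + k j) - q ^ (lam i + n - i + k i)) / (q ^ (n - j) - q ^ (n - i)))"

end

theory Submission
  imports Defs "Jordan_Normal_Form.Determinant"
begin

(* Expanding prod_{m<j} (1 + beta_m x) into elementary symmetric polynomials writes column j of
   the numerator as a linear combination of the monomial columns x_i^(lam_j + n - j + k), k < j.
   By multilinearity in the columns, the numerator is the sum over k_1, ..., k_n of
   e_{k_1} ... e_{k_n} times the alternant det (x_i^(lam_j + n - j + k_j)). At x_i = q^(i-1) every
   alternant is a Vandermonde determinant in the values q^(lam_j + n - j + k_j), and so is the
   denominator, in the values q^(n-i) after reversing the order of the indices. *)

definition leibniz_det :: "'a set \<Rightarrow> ('a \<Rightarrow> 'a \<Rightarrow> 'b::comm_ring_1) \<Rightarrow> 'b" where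
  "leibniz_det S A = (\<Sum>p | p permutes S. of_int (sign p) * (\<Prod>i\<in>S. A i (p i)))"

lemma leibniz_det_cong:
  assumes "\<And>i j. i \<in> S \<Longrightarrow> j \<in> S \<Longrightarrow> A i j = B i j"
  shows "leibniz_det S A = leibniz_det S B"
  unfolding leibniz_det_def using assms
  by (intro sum.cong refl arg_cong[where f="\<lambda>x. _ * x"] prod.cong) (auto dest: permutes_in_image)

lemma leibniz_det_reindex:
  assumes f: "bij_betw f S T" and S: "finite S"
  shows "leibniz_det T A = leibniz_det S (\<lambda>i j. A (f i) (f j))"
proof -
  have fS: "f ` S = T" using f by (simp add: bij_betw_def)
  have bij: "bij_betw (map_permutation S f) {p. p permutes S} {p. p permutes T}"
  proof -
    have "map_permutation S f = (\<lambda>\<pi> x. if x \<in> T then f (\<pi> (inv_into S f x)) else x)"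
      by (auto simp: fun_eq_iff map_permutation_def restrict_id_def fS)
    then show ?thesis using bij_betw_permutations[OF f] by simp
  qed
  have summand: "of_int (sign (map_permutation S f p)) * (\<Prod>i\<in>T. A i (map_permutation S f p i))
      = of_int (sign p) * (\<Prod>i\<in>S. A (f i) (f (p i)))" if p: "p permutes S" for p
  proof -
    have inj: "inj_on f S" using f by (rule bij_betw_imp_inj_on)
    have "(\<Prod>i\<in>T. A i (map_permutation S f p i)) = (\<Prod>i\<in>S. A (f i) (map_permutation S f p (f i)))"
      by (rule prod.reindex_bij_betw[OF f, symmetric])
    also have "\<dots> = (\<Prod>i\<in>S. A (f i) (f (p i)))"
      using inj by (simp add: map_permutation_apply)
    finally show ?thesis using sign_map_permutation[OF inj p S] by simp
  qed
  have "leibniz_det T A = (\<Sum>p | p permutes S.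
      of_int (sign (map_permutation S f p)) * (\<Prod>i\<in>T. A i (map_permutation S f p i)))"
    unfolding leibniz_det_def by (rule sum.reindex_bij_betw[OF bij, symmetric])
  also have "\<dots> = leibniz_det S (\<lambda>i j. A (f i) (f j))"
    unfolding leibniz_det_def by (rule sum.cong) (simp_all add: summand)
  finally show ?thesis .
qed

lemma leibniz_det_mult_cols:
  "leibniz_det S (\<lambda>i j. c j * A i j) = (\<Prod>j\<in>S. c j) * leibniz_det S A"
proof -
  have factor: "(\<Prod>i\<in>S. c (p i) * A i (p i)) = (\<Prod>j\<in>S. c j) * (\<Prod>i\<in>S. A i (p i))"
    if "p permutes S" for p
    using prod.permute[OF that, of c] by (simp add: prod.distrib comp_def)
  show ?thesis
    unfolding leibniz_det_def sum_distrib_left by (intro sum.cong refl) (simp add: factor mult_ac)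
qed

lemma leibniz_det_sum_cols:
  assumes S: "finite S" and K: "\<And>j. j \<in> S \<Longrightarrow> finite (K j)"
  shows "leibniz_det S (\<lambda>i j. \<Sum>k\<in>K j. A i j k) = (\<Sum>\<kappa>\<in>PiE S K. leibniz_det S (\<lambda>i j. A i j (\<kappa> j)))"
proof -
  have expand: "(\<Prod>i\<in>S. \<Sum>k\<in>K (p i). A i (p i) k) = (\<Sum>\<kappa>\<in>PiE S K. \<Prod>i\<in>S. A i (p i) (\<kappa> (p i)))"
    if p: "p permutes S" for p
  proof -
    let ?B = "\<lambda>j. A (inv_into UNIV p j) j"
    have pinv: "inv_into UNIV p (p i) = i" for i by (simp add: permutes_inverses(2)[OF p])
    have "(\<Prod>i\<in>S. \<Sum>k\<in>K (p i). A i (p i) k) = (\<Prod>j\<in>S. \<Sum>k\<in>K j. ?B j k)"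
      using prod.permute[OF p, of "\<lambda>j. \<Sum>k\<in>K j. ?B j k"] by (simp add: comp_def pinv)
    also have "\<dots> = (\<Sum>\<kappa>\<in>PiE S K. \<Prod>j\<in>S. ?B j (\<kappa> j))"
      by (rule prod_sum_PiE[OF S K])
    also have "\<dots> = (\<Sum>\<kappa>\<in>PiE S K. \<Prod>i\<in>S. A i (p i) (\<kappa> (p i)))"
    proof (rule sum.cong[OF refl])
      fix \<kappa>
      show "(\<Prod>j\<in>S. ?B j (\<kappa> j)) = (\<Prod>i\<in>S. A i (p i) (\<kappa> (p i)))"
        using prod.permute[OF p, of "\<lambda>j. ?B j (\<kappa> j)"] by (simp add: comp_def pinv)
    qed
    finally show ?thesis .
  qed
  show ?thesis
    unfolding leibniz_det_def sum_distrib_left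
    by (subst sum.swap) (intro sum.cong refl, simp add: expand sum_distrib_left)
qed

lemma det_mat_eq_leibniz_det:
  "det (mat n n (\<lambda>(i,j). A i j)) = leibniz_det {..<n} A"
proof -
  have entries: "(\<Prod>i\<in>{..<n}. mat n n (\<lambda>(i,j). A i j) $$ (i, p i)) = (\<Prod>i\<in>{..<n}. A i (p i))"
    if "p permutes {..<n}" for p
    using permutes_in_image[OF that] by (intro prod.cong) auto
  show ?thesis
    unfolding det_def'[OF mat_carrier] leibniz_det_def atLeast0LessThan
    by (intro sum.cong refl) (simp add: entries)
qed

lemma det_vandermonde_Suc:
  fixes y :: "nat \<Rightarrow> 'a::comm_ring_1"
  shows "det (mat (Suc n) (Suc n) (\<lambda>(i,j). y j ^ i))
       = (\<Prod>j<n. y (Suc j) - y 0) * det (mat n n (\<lambda>(i,j). y (Suc j) ^ i))"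
proof -
  define A where "A = (mat (Suc n) (Suc n) (\<lambda>(i,j). y j ^ i) :: 'a mat)"
  \<comment> \<open>\<open>E * A\<close> subtracts \<open>y 0\<close> times row \<open>i - 1\<close> from each row \<open>i > 0\<close>, clearing column 0 below the corner\<close>
  define E where "E = (mat (Suc n) (Suc n)
    (\<lambda>(i,k). if k = i then 1 else if k + 1 = i then - y 0 else 0) :: 'a mat)"
  define B where "B = (mat (Suc n) (Suc n)
    (\<lambda>(i,j). if i = 0 then 1 else (y j - y 0) * y j ^ (i - 1)) :: 'a mat)"
  have A: "A \<in> carrier_mat (Suc n) (Suc n)" and E: "E \<in> carrier_mat (Suc n) (Suc n)"
    and B: "B \<in> carrier_mat (Suc n) (Suc n)"
    unfolding A_def E_def B_def by auto
  have "det E = prod_list (diag_mat E)"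
    by (rule det_lower_triangular[OF _ E]) (simp add: E_def)
  also have "diag_mat E = map (\<lambda>_. 1) [0..<Suc n]"
    by (auto simp: diag_mat_def E_def simp del: upt_Suc intro!: map_cong)
  finally have det_E: "det E = 1"
    by (simp add: map_replicate_const)
  have row_reduction: "(\<Sum>k<Suc n. (if k = i then 1 else if k + 1 = i then - y 0 else 0) * t ^ k)
      = (if i = 0 then 1 else (t - y 0) * t ^ (i - 1))" if "i < Suc n" for i t
  proof (cases i)
    case (Suc m)
    have "(\<Sum>k<Suc n. (if k = i then 1 else if k + 1 = i then - y 0 else 0) * t ^ k)
        = (\<Sum>k<Suc n. (if k = i then t ^ k else 0) + (if k = m then - y 0 * t ^ k else 0))"
      using Suc by (intro sum.cong) auto
    also have "\<dots> = t ^ i - y 0 * t ^ m"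
      using Suc that by (simp add: sum.distrib)
    also have "\<dots> = (t - y 0) * t ^ m"
      using Suc by (simp add: algebra_simps)
    finally show ?thesis using Suc by simp
  next
    case 0
    have "(\<Sum>k<Suc n. (if k = i then 1 else if k + 1 = i then - y 0 else 0) * t ^ k)
        = (\<Sum>k<Suc n. if k = 0 then t ^ k else 0)"
      using 0 by (intro sum.cong) auto
    then show ?thesis using 0 by simp
  qed
  have "E * A = B"
  proof (rule eq_matI)
    fix i j assume "i < dim_row B" "j < dim_col B"
    then have i: "i < Suc n" and j: "j < Suc n" by (auto simp: B_def)
    have "(E * A) $$ (i,j) = (\<Sum>k<Suc n. (if k = i then 1 else if k + 1 = i then - y 0 else 0) * y j ^ k)"
      using i j by (simp add: E_def A_def scalar_prod_def atLeast0LessThan)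
    also have "\<dots> = (if i = 0 then 1 else (y j - y 0) * y j ^ (i - 1))"
      by (rule row_reduction[OF i])
    also have "\<dots> = B $$ (i,j)"
      using i j by (simp add: B_def)
    finally show "(E * A) $$ (i,j) = B $$ (i,j)" .
  qed (use E A B in auto)
  then have "det A = det B"
    using det_mult[OF E A] det_E by simp
  also have "det B = (\<Sum>i<Suc n. B $$ (i,0) * cofactor B i 0)"
    by (rule laplace_expansion_column[OF B]) simp
  also have "\<dots> = B $$ (0,0) * cofactor B 0 0"
    by (subst sum.lessThan_Suc_shift) (auto simp: B_def)
  also have "\<dots> = det (mat_delete B 0 0)"
    by (simp add: B_def cofactor_def)
  also have "mat_delete B 0 0 = mat n n (\<lambda>(i,j). (y (Suc j) - y 0) * y (Suc j) ^ i)"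
    by (rule eq_matI) (auto simp: mat_delete_def B_def)
  finally show ?thesis
    unfolding A_def det_mat_eq_leibniz_det leibniz_det_mult_cols .
qed

lemma det_vandermonde:
  fixes y :: "nat \<Rightarrow> 'a::comm_ring_1"
  shows "det (mat n n (\<lambda>(i,j). y j ^ i)) = (\<Prod>i<n. \<Prod>j\<in>{Suc i..<n}. y j - y i)"
proof (induction n arbitrary: y)
  case (Suc n)
  have "(\<Prod>i<Suc n. \<Prod>j\<in>{Suc i..<Suc n}. y j - y i)
      = (\<Prod>j<n. y (Suc j) - y 0) * (\<Prod>i<n. \<Prod>j\<in>{Suc i..<n}. y (Suc j) - y (Suc i))"
    by (simp only: prod.lessThan_Suc_shift prod.shift_bounds_Suc_ivl atLeast0LessThan)
  then show ?case
    using det_vandermonde_Suc[where y=y and n=n] Suc.IH[of "y \<circ> Suc"] by simp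
qed simp

lemma prod_pairs_shift_Suc:
  fixes F :: "nat \<Rightarrow> nat \<Rightarrow> 'a::comm_monoid_mult"
  shows "(\<Prod>i<n. \<Prod>j\<in>{Suc i..<n}. F (Suc i) (Suc j)) = (\<Prod>i\<in>{1..n}. \<Prod>j\<in>{i<..n}. F i j)"
proof -
  have outer: "{1..n} = Suc ` {..<n}" by (simp add: image_Suc_lessThan)
  have inner: "{Suc i<..n} = Suc ` {Suc i..<n}" for i
    by simp fastforce
  have "(\<Prod>i\<in>{1..n}. \<Prod>j\<in>{i<..n}. F i j) = (\<Prod>i<n. \<Prod>j\<in>{Suc i<..n}. F (Suc i) j)"
    unfolding outer by (subst prod.reindex) auto
  also have "\<dots> = (\<Prod>i<n. \<Prod>j\<in>{Suc i..<n}. F (Suc i) (Suc j))"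
    unfolding inner by (subst prod.reindex) auto
  finally show ?thesis by simp
qed

lemma prod_pairs_reflect:
  fixes F :: "nat \<Rightarrow> nat \<Rightarrow> 'a::comm_monoid_mult"
  shows "(\<Prod>i\<in>{1..n}. \<Prod>j\<in>{i<..n}. F (Suc n - j) (Suc n - i)) = (\<Prod>i\<in>{1..n}. \<Prod>j\<in>{i<..n}. F i j)"
proof -
  let ?P = "Sigma {1..n} (\<lambda>i. {i<..n})"
  let ?h = "\<lambda>(i::nat, j::nat). (Suc n - j, Suc n - i)"
  have "(\<Prod>i\<in>{1..n}. \<Prod>j\<in>{i<..n}. F (Suc n - j) (Suc n - i)) = (\<Prod>(i,j)\<in>?P. F (Suc n - j) (Suc n - i))"
    by (rule prod.Sigma) auto
  also have "\<dots> = (\<Prod>(i,j)\<in>?P. F i j)"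
    by (rule prod.reindex_bij_witness[where i="?h" and j="?h"]) auto
  also have "\<dots> = (\<Prod>i\<in>{1..n}. \<Prod>j\<in>{i<..n}. F i j)"
    by (rule prod.Sigma[symmetric]) auto
  finally show ?thesis .
qed

lemma leibniz_det_vandermonde:
  fixes y :: "nat \<Rightarrow> 'a::comm_ring_1"
  shows "leibniz_det {1..n} (\<lambda>i j. y j ^ (i - 1)) = (\<Prod>i\<in>{1..n}. \<Prod>j\<in>{i<..n}. y j - y i)"
proof -
  have "bij_betw Suc {..<n} {1..n}"
    by (simp add: bij_betw_def image_Suc_lessThan)
  then have "leibniz_det {1..n} (\<lambda>i j. y j ^ (i - 1)) = leibniz_det {..<n} (\<lambda>i j. y (Suc j) ^ (Suc i - 1))"
    by (rule leibniz_det_reindex) simp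
  also have "\<dots> = det (mat n n (\<lambda>(i,j). y (Suc j) ^ i))"
    by (simp add: det_mat_eq_leibniz_det)
  also have "\<dots> = (\<Prod>i\<in>{1..n}. \<Prod>j\<in>{i<..n}. y j - y i)"
    by (simp add: det_vandermonde prod_pairs_shift_Suc[where F="\<lambda>i j. y j - y i"])
  finally show ?thesis .
qed

lemma prod_one_plus_eq_esym:
  "(\<Prod>m\<in>{1..r}. 1 + beta m * x) = (\<Sum>k\<le>r. esym r k beta * x ^ k)"
proof -
  have "(\<Prod>m\<in>{1..r}. 1 + beta m * x) = (\<Sum>X\<in>Pow {1..r}. (\<Prod>m\<in>X. beta m * x) * (\<Prod>m\<in>{1..r} - X. 1))"
    using prod_add[of "{1..r}" "\<lambda>m. beta m * x" "\<lambda>_. 1"] by (simp add: add.commute)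
  also have "\<dots> = (\<Sum>X\<in>Pow {1..r}. (\<Prod>m\<in>X. beta m) * x ^ card X)"
    by (simp add: prod.distrib)
  also have "\<dots> = (\<Sum>k\<le>r. \<Sum>X | X \<in> Pow {1..r} \<and> card X = k. (\<Prod>m\<in>X. beta m) * x ^ card X)"
    by (rule sum.group[symmetric]) (auto dest: card_mono[rotated])
  also have "\<dots> = (\<Sum>k\<le>r. esym r k beta * x ^ k)"
    unfolding esym_def sum_distrib_right by (intro sum.cong) auto
  finally show ?thesis .
qed

lemma esym_const: "esym r k (\<lambda>_. b) = of_nat (r choose k) * b ^ k"
proof -
  have "esym r k (\<lambda>_. b) = (\<Sum>S | S \<subseteq> {1..r} \<and> card S = k. b ^ k)"
    unfolding esym_def by (rule sum.cong) auto
  then show ?thesis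
    using n_subsets[of "{1..r}" k] by simp
qed

lemma gmat_geometric:
  assumes "1 \<le> j"
  shows "gmat n lam beta (\<lambda>i. q ^ (i - 1)) i j
       = (\<Sum>k<j. esym (j - 1) k beta * (q ^ (lam j + n - j + k)) ^ (i - 1))"
proof -
  have "{1..<j} = {1..j - 1}" and "{..j - 1} = {..<j}"
    using assms by auto
  then have expand: "(\<Prod>m\<in>{1..<j}. 1 + beta m * x) = (\<Sum>k<j. esym (j - 1) k beta * x ^ k)" for x
    using prod_one_plus_eq_esym[where r="j - 1" and beta=beta and x=x] by simp
  have pow: "(q ^ (c + k)) ^ m = (q ^ m) ^ c * (q ^ m) ^ k" for c k m :: nat
    by (simp add: power_add power_mult_distrib mult.commute flip: power_mult)
  show ?thesis
    unfolding gmat_def expand sum_distrib_left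
    by (intro sum.cong refl) (simp only: pow mult.commute mult.left_commute)
qed

lemma refined_groth_geometric:
  "refined_groth n lam beta (\<lambda>i. q ^ (i - 1)) =
     (\<Sum>k\<in>(\<Pi>\<^sub>E j\<in>{1..n}. {..<j}). (\<Prod>j\<in>{1..n}. esym (j - 1) (k j) beta) * qprod n lam q k)"
proof -
  define a where "a j = lam j + n - j" for j
  define V where "V k = (\<Prod>i\<in>{1..n}. \<Prod>j\<in>{i<..n}. q ^ (a j + k j) - q ^ (a i + k i))"
    for k :: "nat \<Rightarrow> nat"
  have "(\<Prod>i\<in>{1..n}. \<Prod>j\<in>{i<..n}. q ^ (n - j) - q ^ (n - i))
      = (\<Prod>i\<in>{1..n}. \<Prod>j\<in>{i<..n}. q ^ (n - (Suc n - i)) - q ^ (n - (Suc n - j)))"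
    by (rule prod_pairs_reflect[where F="\<lambda>i j. q ^ (n - j) - q ^ (n - i)", symmetric])
  also have "\<dots> = (\<Prod>i\<in>{1..n}. \<Prod>j\<in>{i<..n}. q ^ (i - 1) - q ^ (j - 1))"
    by (intro prod.cong refl) auto
  finally have denominator: "(\<Prod>i\<in>{1..n}. \<Prod>j\<in>{i<..n}. q ^ (i - 1) - q ^ (j - 1))
      = (\<Prod>i\<in>{1..n}. \<Prod>j\<in>{i<..n}. q ^ (n - j) - q ^ (n - i))" ..
  have "refined_groth n lam beta (\<lambda>i. q ^ (i - 1))
      = leibniz_det {1..n} (\<lambda>i j. \<Sum>k<j. esym (j - 1) k beta * (q ^ (a j + k)) ^ (i - 1))
        / (\<Prod>i\<in>{1..n}. \<Prod>j\<in>{i<..n}. q ^ (i - 1) - q ^ (j - 1))"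
    unfolding refined_groth_def leibniz_det_def[symmetric] a_def
    by (intro arg_cong2[where f="(/)"] leibniz_det_cong refl gmat_geometric) simp
  also have "leibniz_det {1..n} (\<lambda>i j. \<Sum>k<j. esym (j - 1) k beta * (q ^ (a j + k)) ^ (i - 1))
      = (\<Sum>k\<in>(\<Pi>\<^sub>E j\<in>{1..n}. {..<j}). (\<Prod>j\<in>{1..n}. esym (j - 1) (k j) beta)
          * leibniz_det {1..n} (\<lambda>i j. (q ^ (a j + k j)) ^ (i - 1)))"
    by (simp only: leibniz_det_sum_cols finite_atLeastAtMost finite_lessThan leibniz_det_mult_cols)
  also have "\<dots> = (\<Sum>k\<in>(\<Pi>\<^sub>E j\<in>{1..n}. {..<j}). (\<Prod>j\<in>{1..n}. esym (j - 1) (k j) beta) * V k)"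
    unfolding V_def leibniz_det_vandermonde ..
  finally show ?thesis
    unfolding denominator qprod_def sum_divide_distrib V_def a_def
    by (simp add: prod_dividef)
qed

theorem theorem3p5:
  fixes n :: nat and lam :: "nat \<Rightarrow> nat" and beta :: "nat \<Rightarrow> complex"
    and q b :: complex
  assumes "n \<ge> 1" and "is_partition n lam"
    and "\<forall>m. 1 \<le> m \<and> m \<le> n - 1 \<longrightarrow> q ^ m \<noteq> 1"
  shows "refined_groth n lam beta (\<lambda>i. q ^ (i - 1)) =
           (\<Sum>k\<in>(\<Pi>\<^sub>E j\<in>{1..n}. {..<j}).
              (\<Prod>j\<in>{1..n}. esym (j - 1) (k j) beta) * qprod n lam q k)
     \<and> refined_groth n lam (\<lambda>_. b) (\<lambda>i. q ^ (i - 1)) =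
           (\<Sum>k\<in>(\<Pi>\<^sub>E j\<in>{1..n}. {..<j}).
              (\<Prod>j\<in>{1..n}. of_nat ((j - 1) choose (k j))) * b ^ (\<Sum>j\<in>{1..n}. k j)
              * qprod n lam q k)"
  using refined_groth_geometric[of n lam beta q] refined_groth_geometric[of n lam "\<lambda>_. b" q]
  by (simp add: esym_const prod.distrib power_sum mult.assoc)

end
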